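(* Let $\mathrm{VFS}$, $\mathrm{CPS}$, the negative translation ($V^{\sim}$, $M^{\wr}$, $M^{-}$) and the inverse translation ($P^{+}$, $M^{\times}$, $V^{\times\times}$) be as in the context. Then: (1) for all terms $M$ and values $V$ of $\mathrm{VFS}$, $(M^{-})^{+}=M$, $(M^{\wr})^{\times}=M$ and $(V^{\sim})^{\times\times}=V$; (2) for all terms $P$, commands $M$ and values $V$ of $\mathrm{CPS}$, $(P^{+})^{-}=P$, $(M^{\times})^{\wr}=M$ and $(V^{\times\times})^{\sim}=V$; (3) if $M_1\to M_2$ in $\mathrm{VFS}$ then $M_1^{\wr}\to M_2^{\wr}$ in $\mathrm{CPS}$ (hence $M_1^{-}\to M_2^{-}$ in $\mathrm{CPS}$); (4) if $M_1\to M_2$ for commands in $\mathrm{CPS}$ then $M_1^{\times}\to M_2^{\times}$ in $\mathrm{VFS}$; hence if $P_1\to P_2$ for terms in $\mathrm{CPS}$ then $P_1^{+}\to P_2^{+}$ in $\mathrm{VFS}$.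
   Context: Terms are considered up to $\alpha$-conversion; $[V/x]$ and $[K/k]$ denote capture-avoiding substitution; $\to$ denotes one-step reduction, i.e. the closure of the listed rules under all constructors. $\mathrm{VFS}$: terms $M,N::=\uparrow V\mid \mathsf{C}_v(V,c)$; values $V,W::=x\mid\lambda x.M$; formal contexts $c::= x.M\mid (W,x.M)$ ($x$ bound in $M$). Auxiliary operation: $\mathsf{C}_v(\uparrow V:c')=\mathsf{C}_v(V,c')$, $\mathsf{C}_v(\mathsf{C}_v(V,c):c')=\mathsf{C}_v(V,(c:c'))$, $((x.M):c')=x.\mathsf{C}_v(M:c')$, $((W,x.M):c')=(W,x.\mathsf{C}_v(M:c'))$. Rules: $(B_v)$ $\mathsf{C}_v(\lambda x.M,(V,y.N))\to \mathsf{C}_v(V,x.\mathsf{C}_v(M:y.N))$; $(\sigma_v)$ $\mathsf{C}_v(V,y.N)\to [V/y]N$. $\mathrm{CPS}$ (with a fixed distinguished covariable $k$): commands $M,N::= kV\mid KV\mid VWK$; continuations $K::=\lambda x.M$; values $V,W::=\lambda x.P\mid x$; terms $P::=\lambda k.M$. Rules: $(\sigma_v)$ $(\lambda x.M)V\to[V/x]M$; $(B_v)$ $(\lambda x.\lambda k.M)WK\to(\lambda x.[K/k]M)W$. Negative translation: $x^{\sim}=x$; $(\lambda x.M)^{\sim}=\lambda x.M^{-}$; $M^{-}=\lambda k.M^{\wr}$; $(\uparrow V)^{\wr}=kV^{\sim}$; $\mathsf{C}_v(V,x.M)^{\wr}=(\lambda x.M^{\wr})V^{\sim}$; $\mathsf{C}_v(V,(W,x.M))^{\wr}=V^{\sim}W^{\sim}(\lambda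 x.M^{\wr})$. Inverse translation: $(\lambda k.M)^{+}=M^{\times}$; $(kV)^{\times}=\uparrow(V^{\times\times})$; $((\lambda x.M)V)^{\times}=\mathsf{C}_v(V^{\times\times},x.M^{\times})$; $(VW(\lambda x.M))^{\times}=\mathsf{C}_v(V^{\times\times},(W^{\times\times},x.M^{\times}))$; $x^{\times\times}=x$; $(\lambda x.P)^{\times\times}=\lambda x.P^{+}$. *)

theory Defs
  imports Main
begin

text \<open>Terms are represented with de Bruijn indices for value variables, so that
  terms are identified up to alpha-conversion and substitution is capture-avoiding
  by construction.  The single CPS covariable k needs no index: an occurrence of k
  always refers to the nearest enclosing binder lambda k.\<close>

datatype vtm =
    VRet vval
  | VCut vval vctx
and vval =
    VVar nat
  | VLam vtm             \<comment> \<open>lambda x. M\<close>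
and vctx =
    VAbs vtm             \<comment> \<open>x.M\<close>
  | VArg vval vtm        \<comment> \<open>(W, x.M)\<close>

fun vlift_tm :: "nat \<Rightarrow> vtm \<Rightarrow> vtm"
and vlift_val :: "nat \<Rightarrow> vval \<Rightarrow> vval"
and vlift_ctx :: "nat \<Rightarrow> vctx \<Rightarrow> vctx" where
  "vlift_tm c (VRet V) = VRet (vlift_val c V)"
| "vlift_tm c (VCut V k) = VCut (vlift_val c V) (vlift_ctx c k)"
| "vlift_val c (VVar i) = VVar (if i < c then i else Suc i)"
| "vlift_val c (VLam M) = VLam (vlift_tm (Suc c) M)"
| "vlift_ctx c (VAbs M) = VAbs (vlift_tm (Suc c) M)"
| "vlift_ctx c (VArg W M) = VArg (vlift_val c W) (vlift_tm (Suc c) M)"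

text \<open>vsubst_tm j U N substitutes U for the variable with index j in N
  (and lowers the indices above j): this is [U/x]N when x is bound at j.\<close>
fun vsubst_tm :: "nat \<Rightarrow> vval \<Rightarrow> vtm \<Rightarrow> vtm"
and vsubst_val :: "nat \<Rightarrow> vval \<Rightarrow> vval \<Rightarrow> vval"
and vsubst_ctx :: "nat \<Rightarrow> vval \<Rightarrow> vctx \<Rightarrow> vctx" where
  "vsubst_tm j U (VRet V) = VRet (vsubst_val j U V)"
| "vsubst_tm j U (VCut V k) = VCut (vsubst_val j U V) (vsubst_ctx j U k)"
| "vsubst_val j U (VVar i) = (if i < j then VVar i else if i = j then U else VVar (i - 1))"
| "vsubst_val j U (VLam M) = VLam (vsubst_tm (Suc j) (vlift_val 0 U) M)"
| "vsubst_ctx j U (VAbs M) = VAbs (vsubst_tm (Suc j) (vlift_val 0 U) M)"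
| "vsubst_ctx j U (VArg W M) = VArg (vsubst_val j U W) (vsubst_tm (Suc j) (vlift_val 0 U) M)"

fun vapp_tm :: "vtm \<Rightarrow> vctx \<Rightarrow> vtm"
and vapp_ctx :: "vctx \<Rightarrow> vctx \<Rightarrow> vctx" where
  "vapp_tm (VRet V) c' = VCut V c'"
| "vapp_tm (VCut V c) c' = VCut V (vapp_ctx c c')"
| "vapp_ctx (VAbs M) c' = VAbs (vapp_tm M (vlift_ctx 0 c'))"
| "vapp_ctx (VArg W M) c' = VArg W (vapp_tm M (vlift_ctx 0 c'))"

inductive vstep_tm :: "vtm \<Rightarrow> vtm \<Rightarrow> bool"
and vstep_val :: "vval \<Rightarrow> vval \<Rightarrow> bool"
and vstep_ctx :: "vctx \<Rightarrow> vctx \<Rightarrow> bool" where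
  vBv: "vstep_tm (VCut (VLam M) (VArg V N)) (VCut V (VAbs (vapp_tm M (vlift_ctx 0 (VAbs N)))))"
| vsigma: "vstep_tm (VCut V (VAbs N)) (vsubst_tm 0 V N)"
| vRet: "vstep_val V V' \<Longrightarrow> vstep_tm (VRet V) (VRet V')"
| vCut1: "vstep_val V V' \<Longrightarrow> vstep_tm (VCut V c) (VCut V' c)"
| vCut2: "vstep_ctx c c' \<Longrightarrow> vstep_tm (VCut V c) (VCut V c')"
| vLam: "vstep_tm M M' \<Longrightarrow> vstep_val (VLam M) (VLam M')"
| vAbs: "vstep_tm M M' \<Longrightarrow> vstep_ctx (VAbs M) (VAbs M')"
| vArg1: "vstep_val W W' \<Longrightarrow> vstep_ctx (VArg W M) (VArg W' M)"
| vArg2: "vstep_tm M M' \<Longrightarrow> vstep_ctx (VArg W M) (VArg W M')"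

datatype ccmd =
    CRet cval              \<comment> \<open>k V\<close>
  | CCont ccnt cval        \<comment> \<open>K V\<close>
  | CApp cval cval ccnt    \<comment> \<open>V W K\<close>
and ccnt =
    CK ccmd                \<comment> \<open>lambda x. M\<close>
and cval =
    CVar nat
  | CLam cterm             \<comment> \<open>lambda x. P\<close>
and cterm =
    CP ccmd                \<comment> \<open>lambda k. M\<close>

fun clift_cmd :: "nat \<Rightarrow> ccmd \<Rightarrow> ccmd"
and clift_cnt :: "nat \<Rightarrow> ccnt \<Rightarrow> ccnt"
and clift_val :: "nat \<Rightarrow> cval \<Rightarrow> cval"
and clift_term :: "nat \<Rightarrow> cterm \<Rightarrow> cterm" where
  "clift_cmd c (CRet V) = CRet (clift_val c V)"
| "clift_cmd c (CCont K V) = CCont (clift_cnt c K) (clift_val c V)"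
| "clift_cmd c (CApp V W K) = CApp (clift_val c V) (clift_val c W) (clift_cnt c K)"
| "clift_cnt c (CK M) = CK (clift_cmd (Suc c) M)"
| "clift_val c (CVar i) = CVar (if i < c then i else Suc i)"
| "clift_val c (CLam P) = CLam (clift_term (Suc c) P)"
| "clift_term c (CP M) = CP (clift_cmd c M)"

fun csubst_cmd :: "nat \<Rightarrow> cval \<Rightarrow> ccmd \<Rightarrow> ccmd"
and csubst_cnt :: "nat \<Rightarrow> cval \<Rightarrow> ccnt \<Rightarrow> ccnt"
and csubst_val :: "nat \<Rightarrow> cval \<Rightarrow> cval \<Rightarrow> cval"
and csubst_term :: "nat \<Rightarrow> cval \<Rightarrow> cterm \<Rightarrow> cterm" where
  "csubst_cmd j U (CRet V) = CRet (csubst_val j U V)"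
| "csubst_cmd j U (CCont K V) = CCont (csubst_cnt j U K) (csubst_val j U V)"
| "csubst_cmd j U (CApp V W K) = CApp (csubst_val j U V) (csubst_val j U W) (csubst_cnt j U K)"
| "csubst_cnt j U (CK M) = CK (csubst_cmd (Suc j) (clift_val 0 U) M)"
| "csubst_val j U (CVar i) = (if i < j then CVar i else if i = j then U else CVar (i - 1))"
| "csubst_val j U (CLam P) = CLam (csubst_term (Suc j) (clift_val 0 U) P)"
| "csubst_term j U (CP M) = CP (csubst_cmd j U M)"

text \<open>[K/k]M: replaces the free occurrences of the covariable k in the command M.
  Values contain no free k (their k is bound by their own lambda k).\<close>
fun ksubst_cmd :: "ccnt \<Rightarrow> ccmd \<Rightarrow> ccmd" where
  "ksubst_cmd K (CRet V) = CCont K V"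
| "ksubst_cmd K (CCont (CK M) V) = CCont (CK (ksubst_cmd (clift_cnt 0 K) M)) V"
| "ksubst_cmd K (CApp V W (CK M)) = CApp V W (CK (ksubst_cmd (clift_cnt 0 K) M))"

inductive cstep_cmd :: "ccmd \<Rightarrow> ccmd \<Rightarrow> bool"
and cstep_cnt :: "ccnt \<Rightarrow> ccnt \<Rightarrow> bool"
and cstep_val :: "cval \<Rightarrow> cval \<Rightarrow> bool"
and cstep_term :: "cterm \<Rightarrow> cterm \<Rightarrow> bool" where
  csigma: "cstep_cmd (CCont (CK M) V) (csubst_cmd 0 V M)"
| cBv: "cstep_cmd (CApp (CLam (CP M)) W K) (CCont (CK (ksubst_cmd (clift_cnt 0 K) M)) W)"
| cRet: "cstep_val V V' \<Longrightarrow> cstep_cmd (CRet V) (CRet V')"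
| cCont1: "cstep_cnt K K' \<Longrightarrow> cstep_cmd (CCont K V) (CCont K' V)"
| cCont2: "cstep_val V V' \<Longrightarrow> cstep_cmd (CCont K V) (CCont K V')"
| cApp1: "cstep_val V V' \<Longrightarrow> cstep_cmd (CApp V W K) (CApp V' W K)"
| cApp2: "cstep_val W W' \<Longrightarrow> cstep_cmd (CApp V W K) (CApp V W' K)"
| cApp3: "cstep_cnt K K' \<Longrightarrow> cstep_cmd (CApp V W K) (CApp V W K')"
| cK: "cstep_cmd M M' \<Longrightarrow> cstep_cnt (CK M) (CK M')"
| cLam: "cstep_term P P' \<Longrightarrow> cstep_val (CLam P) (CLam P')"
| cP: "cstep_cmd M M' \<Longrightarrow> cstep_term (CP M) (CP M')"

fun neg_wr :: "vtm \<Rightarrow> ccmd"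
and neg_val :: "vval \<Rightarrow> cval" where
  "neg_wr (VRet V) = CRet (neg_val V)"
| "neg_wr (VCut V (VAbs M)) = CCont (CK (neg_wr M)) (neg_val V)"
| "neg_wr (VCut V (VArg W M)) = CApp (neg_val V) (neg_val W) (CK (neg_wr M))"
| "neg_val (VVar x) = CVar x"
| "neg_val (VLam M) = CLam (CP (neg_wr M))"

definition neg_tm :: "vtm \<Rightarrow> cterm" where
  "neg_tm M = CP (neg_wr M)"

fun inv_cmd :: "ccmd \<Rightarrow> vtm"
and inv_val :: "cval \<Rightarrow> vval"
and inv_term :: "cterm \<Rightarrow> vtm" where
  "inv_term (CP M) = inv_cmd M"
| "inv_cmd (CRet V) = VRet (inv_val V)"
| "inv_cmd (CCont (CK M) V) = VCut (inv_val V) (VAbs (inv_cmd M))"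
| "inv_cmd (CApp V W (CK M)) = VCut (inv_val V) (VArg (inv_val W) (inv_cmd M))"
| "inv_val (CVar x) = VVar x"
| "inv_val (CLam P) = VLam (inv_term P)"

end

theory Submission
  imports Defs
begin

text \<open>The negative translation is a syntactic bijection between VFS and CPS whose inverse
  is the inverse translation.  It commutes with lifting and substitution of values and sends
  the auxiliary operation M : (x.N) to the covariable substitution [K/k], so every VFS redex is
  sent to a CPS redex of the same rule and its contractum to the corresponding contractum.
  Transporting these commutation laws along the bijection gives the same laws for the inverse
  translation, which therefore simulates CPS reduction in the same way.\<close>

lemma inv_cmd_neg_wr: "inv_cmd (neg_wr M) = M"
  and inv_val_neg_val: "inv_val (neg_val V) = V"
  by (induction M and V rule: neg_wr_neg_val.induct) auto

lemma neg_wr_inv_cmd: "neg_wr (inv_cmd M) = M"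
  and neg_val_inv_val: "neg_val (inv_val V) = V"
  and neg_tm_inv_term: "neg_tm (inv_term P) = P"
  by (induction M and V and P rule: inv_cmd_inv_val_inv_term.induct) (auto simp: neg_tm_def)

lemma inv_term_neg_tm: "inv_term (neg_tm M) = M"
  by (simp add: neg_tm_def inv_cmd_neg_wr)

lemma neg_wr_vlift: "neg_wr (vlift_tm c M) = clift_cmd c (neg_wr M)"
  and neg_val_vlift: "neg_val (vlift_val c V) = clift_val c (neg_val V)"
  by (induction M and V arbitrary: c and c rule: neg_wr_neg_val.induct) auto

lemma neg_wr_vsubst: "neg_wr (vsubst_tm j U M) = csubst_cmd j (neg_val U) (neg_wr M)"
  and neg_val_vsubst: "neg_val (vsubst_val j U V) = csubst_val j (neg_val U) (neg_val V)"
  by (induction M and V arbitrary: j U and j U rule: neg_wr_neg_val.induct)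
    (auto simp: neg_val_vlift)

lemma neg_wr_vapp: "neg_wr (vapp_tm M (VAbs N)) = ksubst_cmd (CK (neg_wr N)) (neg_wr M)"
  by (induction M arbitrary: N rule: neg_wr_neg_val.induct(1)[where ?Q = "\<lambda>_. True"])
    (auto simp: neg_wr_vlift)

lemma inv_cmd_clift: "inv_cmd (clift_cmd c M) = vlift_tm c (inv_cmd M)"
  by (metis inv_cmd_neg_wr neg_wr_inv_cmd neg_wr_vlift)

lemma inv_cmd_csubst: "inv_cmd (csubst_cmd j U M) = vsubst_tm j (inv_val U) (inv_cmd M)"
  by (metis inv_cmd_neg_wr neg_wr_inv_cmd neg_val_inv_val neg_wr_vsubst)

lemma inv_cmd_ksubst: "inv_cmd (ksubst_cmd (CK N) M) = vapp_tm (inv_cmd M) (VAbs (inv_cmd N))"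
  by (metis inv_cmd_neg_wr neg_wr_inv_cmd neg_wr_vapp)

lemma neg_wr_vstep:
  "vstep_tm M M' \<Longrightarrow> cstep_cmd (neg_wr M) (neg_wr M')"
  and neg_val_vstep: "vstep_val V V' \<Longrightarrow> cstep_val (neg_val V) (neg_val V')"
  \<comment> \<open>Context steps are stated under a cut: only a cut against a formal context is translated.\<close>
  and neg_wr_VCut_vstep_ctx:
    "vstep_ctx c c' \<Longrightarrow> \<forall>V. cstep_cmd (neg_wr (VCut V c)) (neg_wr (VCut V c'))"
proof (induction rule: vstep_tm_vstep_val_vstep_ctx.inducts)
  case (vBv M V N)
  have "neg_wr (vapp_tm M (vlift_ctx 0 (VAbs N)))
      = ksubst_cmd (clift_cnt 0 (CK (neg_wr N))) (neg_wr M)"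
    by (simp add: neg_wr_vapp neg_wr_vlift)
  then show ?case
    using cBv[of "neg_wr M" "neg_val V" "CK (neg_wr N)"] by simp
next
  case (vsigma V N)
  show ?case
    by (simp add: neg_wr_vsubst csigma)
next
  case (vCut1 V V' c)
  then show ?case
    by (cases c) (auto intro: cCont2 cApp1)
qed (auto intro: cstep_cmd_cstep_cnt_cstep_val_cstep_term.intros)

lemma inv_cmd_cstep:
  "cstep_cmd M M' \<Longrightarrow> vstep_tm (inv_cmd M) (inv_cmd M')"
  and inv_cmd_cstep_cnt: "cstep_cnt K K' \<Longrightarrow>
      (\<forall>V. vstep_tm (inv_cmd (CCont K V)) (inv_cmd (CCont K' V))) \<and>
      (\<forall>V W. vstep_tm (inv_cmd (CApp V W K)) (inv_cmd (CApp V W K')))"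
  and inv_val_cstep: "cstep_val V V' \<Longrightarrow> vstep_val (inv_val V) (inv_val V')"
  and inv_term_cstep: "cstep_term P P' \<Longrightarrow> vstep_tm (inv_term P) (inv_term P')"
proof (induction rule: cstep_cmd_cstep_cnt_cstep_val_cstep_term.inducts)
  case (csigma M V)
  show ?case
    by (simp add: inv_cmd_csubst vsigma)
next
  case (cBv M W K)
  obtain N where K: "K = CK N"
    by (cases K)
  have "inv_cmd (ksubst_cmd (clift_cnt 0 (CK N)) M)
      = vapp_tm (inv_cmd M) (vlift_ctx 0 (VAbs (inv_cmd N)))"
    by (simp add: inv_cmd_ksubst inv_cmd_clift)
  then show ?case
    using vBv[of "inv_cmd M" "inv_val W" "inv_cmd N"] by (simp add: K)
next
  case (cCont2 V V' K)
  then show ?case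
    by (cases K) (simp add: vCut1)
next
  case (cApp1 V V' W K)
  then show ?case
    by (cases K) (simp add: vCut1)
next
  case (cApp2 W W' V K)
  then show ?case
    by (cases K) (simp add: vCut2 vArg1)
qed (auto intro: vstep_tm_vstep_val_vstep_ctx.intros)

theorem theorem3:
  shows "(\<forall>M. inv_term (neg_tm M) = M) \<and> (\<forall>M. inv_cmd (neg_wr M) = M) \<and> (\<forall>V. inv_val (neg_val V) = V)
    \<and> (\<forall>P. neg_tm (inv_term P) = P) \<and> (\<forall>M. neg_wr (inv_cmd M) = M) \<and> (\<forall>V. neg_val (inv_val V) = V)
    \<and> (\<forall>M1 M2. vstep_tm M1 M2 \<longrightarrow> cstep_cmd (neg_wr M1) (neg_wr M2) \<and> cstep_term (neg_tm M1) (neg_tm M2))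
    \<and> (\<forall>M1 M2. cstep_cmd M1 M2 \<longrightarrow> vstep_tm (inv_cmd M1) (inv_cmd M2))
    \<and> (\<forall>P1 P2. cstep_term P1 P2 \<longrightarrow> vstep_tm (inv_term P1) (inv_term P2))"
proof (intro conjI allI impI)
  fix M M' assume "vstep_tm M M'"
  then show "cstep_term (neg_tm M) (neg_tm M')"
    unfolding neg_tm_def by (intro cP neg_wr_vstep)
qed (simp_all add: inv_term_neg_tm inv_cmd_neg_wr inv_val_neg_val neg_tm_inv_term
    neg_wr_inv_cmd neg_val_inv_val neg_wr_vstep inv_cmd_cstep inv_term_cstep)

end
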